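(* Let $H$ be a complex Hilbert space and $\{\mathcal{U}(t)\}_{t\in\mathbb{R}}$ a strongly continuous group on $H$ with generator $\mathcal{L}$. Let $z\in D(\mathcal{L}^\dagger)$ with $z\neq0$, $\mathcal{P}:=(\cdot,z)(z,z)^{-1}z$, $\mathcal{Q}:=1-\mathcal{P}$. Then $\overline{\mathcal{QL}}\mathcal{Q}$ generates a strongly continuous group.
   Context: The scalar product $(\cdot,\cdot)$ on $H$ is conjugate-linear in its second argument. The generator is $\mathcal{L}x:=\lim_{h\to 0}\frac1h[\mathcal{U}(h)x-x]$ on the set $D(\mathcal{L})$ where the limit exists; $\dagger$ denotes the adjoint, the overbar the closure; $D(\overline{\mathcal{QL}}\mathcal{Q})=\{x:\mathcal{Q}x\in D(\overline{\mathcal{QL}})\}$. *)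

theory Defs
  imports "HOL-Analysis.Analysis"
begin

text \<open>A complex Hilbert space is encoded as a real Banach space (type class banach)
  equipped with a complex structure J (multiplication by the imaginary unit) and a
  complex scalar product ip, linear in its first and conjugate-linear in its second
  argument, inducing the norm.\<close>

definition cscale :: "('a::real_vector \<Rightarrow> 'a) \<Rightarrow> complex \<Rightarrow> 'a \<Rightarrow> 'a" where
  "cscale J c x = Re c *\<^sub>R x + Im c *\<^sub>R J x"

definition complex_hilbert :: "('a::banach \<Rightarrow> 'a) \<Rightarrow> ('a \<Rightarrow> 'a \<Rightarrow> complex) \<Rightarrow> bool" where
  "complex_hilbert J ip \<longleftrightarrow>
     bounded_linear J \<and> (\<forall>x. J (J x) = - x) \<and>
     (\<forall>x y w. ip (x + y) w = ip x w + ip y w) \<and>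
     (\<forall>c x y. ip (cscale J c x) y = c * ip x y) \<and>
     (\<forall>x y. ip x y = cnj (ip y x)) \<and>
     (\<forall>x. ip x x = complex_of_real ((norm x)\<^sup>2))"

definition bounded_clinear_op :: "('a::real_normed_vector \<Rightarrow> 'a) \<Rightarrow> ('a \<Rightarrow> 'a) \<Rightarrow> bool" where
  "bounded_clinear_op J T \<longleftrightarrow> bounded_linear T \<and> (\<forall>x. T (J x) = J (T x))"

definition sc_group :: "('a::real_normed_vector \<Rightarrow> 'a) \<Rightarrow> (real \<Rightarrow> 'a \<Rightarrow> 'a) \<Rightarrow> bool" where
  "sc_group J U \<longleftrightarrow>
     (\<forall>t. bounded_clinear_op J (U t)) \<and>
     U 0 = id \<and> (\<forall>s t. U (s + t) = U s \<circ> U t) \<and>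
     (\<forall>x. continuous_on UNIV (\<lambda>t. U t x))"

definition gen_dom :: "(real \<Rightarrow> 'a::real_normed_vector \<Rightarrow> 'a) \<Rightarrow> 'a set" where
  "gen_dom U = {x. \<exists>y. ((\<lambda>h. (1 / h) *\<^sub>R (U h x - x)) \<longlongrightarrow> y) (at 0)}"

definition gen :: "(real \<Rightarrow> 'a::real_normed_vector \<Rightarrow> 'a) \<Rightarrow> 'a \<Rightarrow> 'a" where
  "gen U x = Lim (at 0) (\<lambda>h. (1 / h) *\<^sub>R (U h x - x))"

definition adj_dom :: "('a \<Rightarrow> 'a \<Rightarrow> complex) \<Rightarrow> 'a set \<Rightarrow> ('a \<Rightarrow> 'a) \<Rightarrow> 'a set" where
  "adj_dom ip D L = {z. \<exists>w. \<forall>x\<in>D. ip (L x) z = ip x w}"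

definition projP :: "('a::real_vector \<Rightarrow> 'a) \<Rightarrow> ('a \<Rightarrow> 'a \<Rightarrow> complex) \<Rightarrow> 'a \<Rightarrow> 'a \<Rightarrow> 'a" where
  "projP J ip z x = cscale J (ip x z / ip z z) z"

definition projQ :: "('a::real_vector \<Rightarrow> 'a) \<Rightarrow> ('a \<Rightarrow> 'a \<Rightarrow> complex) \<Rightarrow> 'a \<Rightarrow> 'a \<Rightarrow> 'a" where
  "projQ J ip z x = x - projP J ip z x"

definition op_graph :: "'a set \<Rightarrow> ('a \<Rightarrow> 'a) \<Rightarrow> ('a \<times> 'a) set" where
  "op_graph D A = {(x, A x) | x. x \<in> D}"

definition is_graph :: "('a \<times> 'a) set \<Rightarrow> bool" where
  "is_graph G \<longleftrightarrow> (\<forall>x y y'. (x, y) \<in> G \<longrightarrow> (x, y') \<in> G \<longrightarrow> y = y')"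

definition cl_dom :: "'a::topological_space set \<Rightarrow> ('a \<Rightarrow> 'a) \<Rightarrow> 'a set" where
  "cl_dom D A = {x. \<exists>y. (x, y) \<in> closure (op_graph D A)}"

definition cl_op :: "'a::topological_space set \<Rightarrow> ('a \<Rightarrow> 'a) \<Rightarrow> 'a \<Rightarrow> 'a" where
  "cl_op D A x = (THE y. (x, y) \<in> closure (op_graph D A))"

end

theory Submission
  imports Defs
begin

text \<open>Since z lies in the domain of the adjoint of L, the rank-one part of Q L is bounded:
  P L x = \<phi> x z with \<phi> x = (x, w) / (z, z), where w is the adjoint of L applied to z.  Hence
  Q L = L - \<phi>(\<cdot>) z on D(L) is a bounded perturbation of a generator; the perturbed group T is
  given by Duhamel's formula, which for a rank-one perturbation reduces to a scalar Volterra
  equation, solved by its Neumann series.  So Q L generates a group and in particular is closed.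
  As Q L maps into the orthogonal complement of z, the group T preserves (\<cdot>, z), hence leaves
  the range of Q invariant, and T(t) Q + P is a group whose generator is (Q L) Q.\<close>

section \<open>Integrals over the interval from 0 to t\<close>

definition integral0 :: "real \<Rightarrow> (real \<Rightarrow> 'b::banach) \<Rightarrow> 'b" where
  "integral0 t F = (if 0 \<le> t then integral {0..t} F else - integral {t..0} F)"

lemma integral0_0 [simp]: "integral0 0 F = 0"
  by (simp add: integral0_def)

lemma integral_rescale_unit_interval:
  fixes F :: "real \<Rightarrow> 'b::banach"
  assumes F: "continuous_on UNIV F" and t: "0 < t"
  shows "integral {0..t} F = t *\<^sub>R integral {0..1} (\<lambda>u. F (t * u))"
proof -
  have "(F has_integral integral {0..t} F) {0..t}"
    by (intro integrable_integral integrable_continuous_interval continuous_on_subset[OF F]) auto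
  then have "((\<lambda>x. F (t *\<^sub>R x + 0)) has_integral (integral {0..t} F) /\<^sub>R t ^ DIM(real))
      (cbox ((0 - 0) /\<^sub>R t) ((t - 0) /\<^sub>R t))"
    by (intro has_integral_affinity_iff[OF t, THEN iffD2]) (simp add: cbox_interval)
  then have "((\<lambda>x. F (t * x)) has_integral (integral {0..t} F) /\<^sub>R t) {0..1}"
    using t by (simp add: cbox_interval)
  then show ?thesis
    using t by (simp add: integral_unique)
qed

lemma integral0_rescale:
  fixes F :: "real \<Rightarrow> 'b::banach"
  assumes F: "continuous_on UNIV F"
  shows "integral0 t F = t *\<^sub>R integral {0..1} (\<lambda>u. F (t * u))"
proof (cases t "0::real" rule: linorder_cases)
  case less
  have F': "continuous_on UNIV (\<lambda>x. F (- x))"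
    by (intro continuous_on_compose2[OF F]) (auto intro: continuous_intros)
  have "(F has_integral integral {t..0} F) {t..0}"
    by (intro integrable_integral integrable_continuous_interval continuous_on_subset[OF F]) auto
  then have "integral {t..0} F = integral {0..-t} (\<lambda>x. F (- x))"
    by (subst (asm) has_integral_reflect_real[symmetric]) (simp add: integral_unique)
  also have "\<dots> = - (t *\<^sub>R integral {0..1} (\<lambda>u. F (t * u)))"
    using integral_rescale_unit_interval[OF F', of "-t"] less by simp
  finally show ?thesis
    using less by (simp add: integral0_def)
qed (simp_all add: integral0_def integral_rescale_unit_interval[OF F])

lemma integral0_eq_integral_diff:
  fixes F :: "real \<Rightarrow> 'b::banach"
  assumes F: "continuous_on UNIV F" and "a \<le> s" "a \<le> 0"
  shows "integral0 s F = integral {a..s} F - integral {a..0} F"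
proof (cases "0 \<le> s")
  case True
  have "integral {a..0} F + integral {0..s} F = integral {a..s} F"
    using True assms by (intro Henstock_Kurzweil_Integration.integral_combine
        integrable_continuous_interval continuous_on_subset[OF F]) auto
  then show ?thesis
    using True by (simp add: integral0_def algebra_simps)
next
  case False
  have "integral {a..s} F + integral {s..0} F = integral {a..0} F"
    using False assms by (intro Henstock_Kurzweil_Integration.integral_combine
        integrable_continuous_interval continuous_on_subset[OF F]) auto
  then show ?thesis
    using False by (simp add: integral0_def algebra_simps)
qed

lemma has_vector_derivative_integral0:
  fixes F :: "real \<Rightarrow> 'b::banach"
  assumes F: "continuous_on UNIV F"
  shows "((\<lambda>s. integral0 s F) has_vector_derivative F t) (at t)"
proof -
  define R where "R = \<bar>t\<bar> + 1"
  have "((\<lambda>u. integral {-R..u} F) has_vector_derivative F t) (at t within {-R..R})"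
    by (rule integral_has_vector_derivative) (auto simp: R_def intro: continuous_on_subset[OF F])
  then have "((\<lambda>u. integral {-R..u} F) has_vector_derivative F t) (at t within {-R<..<R})"
    by (rule has_vector_derivative_within_subset) auto
  then have "((\<lambda>u. integral {-R..u} F) has_vector_derivative F t) (at t)"
    by (subst (asm) has_vector_derivative_within_open) (auto simp: R_def)
  then have "((\<lambda>u. integral {-R..u} F - integral {-R..0} F) has_vector_derivative F t) (at t)"
    by (rule derivative_eq_intros) auto
  then show ?thesis
    by (rule has_vector_derivative_transform_within_open[of _ _ _ "{-R<..<R}"])
      (use integral0_eq_integral_diff[OF F, of "-R"] in \<open>auto simp: R_def\<close>)
qed

lemma antiderivative_unique:
  fixes f g :: "real \<Rightarrow> 'b::real_normed_vector"
  assumes "\<And>t. (f has_vector_derivative h t) (at t)" "\<And>t. (g has_vector_derivative h t) (at t)"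
    and "f 0 = g 0"
  shows "f t = g t"
proof -
  have "((\<lambda>t. f t - g t) has_vector_derivative 0) (at t)" for t
    using has_vector_derivative_diff[OF assms(1,2)] by simp
  then obtain c where "\<And>t. f t - g t = c"
    using has_vector_derivative_zero_constant[of UNIV "\<lambda>t. f t - g t"] by auto
  then show ?thesis
    by (metis assms(3) eq_iff_diff_eq_0)
qed

lemma integral0_shift:
  fixes F :: "real \<Rightarrow> 'b::banach"
  assumes F: "continuous_on UNIV F"
  shows "integral0 (s + t) F = integral0 s F + integral0 t (\<lambda>r. F (s + r))"
proof (rule antiderivative_unique[where f="\<lambda>t. integral0 (s + t) F"
      and g="\<lambda>t. integral0 s F + integral0 t (\<lambda>r. F (s + r))"])
  have F': "continuous_on UNIV (\<lambda>r. F (s + r))"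
    by (intro continuous_on_compose2[OF F]) (auto intro: continuous_intros)
  show "((\<lambda>t. integral0 (s + t) F) has_vector_derivative F (s + t)) (at t)" for t
  proof -
    have "((\<lambda>u. integral0 u F) \<circ> (\<lambda>t. s + t) has_vector_derivative 1 *\<^sub>R F (s + t)) (at t)"
      by (rule vector_diff_chain_at) (auto intro!: derivative_eq_intros has_vector_derivative_integral0[OF F])
    then show ?thesis
      by (simp add: o_def)
  qed
  show "((\<lambda>t. integral0 s F + integral0 t (\<lambda>r. F (s + r))) has_vector_derivative F (s + t)) (at t)" for t
    using has_vector_derivative_integral0[OF F', of t] by (auto intro!: derivative_eq_intros)
qed simp

lemma integral0_linear:
  fixes F :: "real \<Rightarrow> 'b::banach"
  assumes F: "continuous_on UNIV F" and h: "bounded_linear h"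
  shows "h (integral0 t F) = integral0 t (\<lambda>s. h (F s))"
proof -
  have "h (integral {a..b} F) = integral {a..b} (\<lambda>s. h (F s))" for a b
    by (rule integral_linear[OF integrable_continuous_interval[OF continuous_on_subset[OF F]] h,
          symmetric, unfolded o_def]) auto
  then show ?thesis
    using linear_simps(4)[OF h] by (simp add: integral0_def)
qed

lemma integral0_add:
  fixes F G :: "real \<Rightarrow> 'b::banach"
  assumes "continuous_on UNIV F" "continuous_on UNIV G"
  shows "integral0 t (\<lambda>s. F s + G s) = integral0 t F + integral0 t G"
  using assms by (simp add: integral0_def integral_add integrable_continuous_interval
      continuous_on_subset[of UNIV])

lemma integral0_diff:
  fixes F G :: "real \<Rightarrow> 'b::banach"
  assumes "continuous_on UNIV F" "continuous_on UNIV G"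
  shows "integral0 t (\<lambda>s. F s - G s) = integral0 t F - integral0 t G"
  using assms by (simp add: integral0_def integral_diff integrable_continuous_interval
      continuous_on_subset[of UNIV])

lemma norm_integral0_le:
  fixes F :: "real \<Rightarrow> 'b::banach"
  assumes F: "continuous_on UNIV F" and B: "\<And>s. s \<in> closed_segment 0 t \<Longrightarrow> norm (F s) \<le> B"
  shows "norm (integral0 t F) \<le> \<bar>t\<bar> * B"
proof -
  have "norm (integral {0..1} (\<lambda>u. F (t * u))) \<le> integral {0..1::real} (\<lambda>u. B)"
  proof (rule Henstock_Kurzweil_Integration.integral_norm_bound_integral)
    show "(\<lambda>u. F (t * u)) integrable_on {0..1}"
      by (intro integrable_continuous_interval continuous_on_compose2[OF F])
        (auto intro: continuous_intros)
    fix u :: real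
    assume "u \<in> {0..1}"
    then have "t * u \<in> closed_segment 0 t"
      by (auto simp: closed_segment_def intro!: exI[of _ u])
    then show "norm (F (t * u)) \<le> B"
      by (rule B)
  qed auto
  then show ?thesis
    by (simp add: integral0_rescale[OF F] mult_left_mono)
qed

lemma continuous_on_integral_unit_interval_rescaled:
  fixes F :: "real \<Rightarrow> real \<Rightarrow> 'b::banach"
  assumes F: "continuous_on UNIV (\<lambda>p. F (fst p) (snd p))"
  shows "continuous_on UNIV (\<lambda>h. integral {0..1} (\<lambda>u. F h (h * u)))"
proof -
  have "continuous_on (UNIV \<times> cbox 0 1) (\<lambda>p. (\<lambda>q. F (fst q) (snd q)) (fst p, fst p * snd p))"
    by (rule continuous_on_compose2[OF F]) (auto intro!: continuous_intros)
  then have "continuous_on (UNIV \<times> cbox 0 1) (\<lambda>(h, u). F h (h * u))"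
    by (simp add: case_prod_unfold)
  then show ?thesis
    using integral_continuous_on_param by (fastforce simp: cbox_interval)
qed

lemma continuous_on_param_section:
  assumes "continuous_on UNIV (\<lambda>p. F (fst p) (snd p))"
  shows "continuous_on UNIV (F h)"
  using continuous_on_compose2[OF assms, of UNIV "\<lambda>s. (h, s)"] by (simp add: continuous_intros)

lemma continuous_on_integral0_param:
  fixes F :: "real \<Rightarrow> real \<Rightarrow> 'b::banach"
  assumes F: "continuous_on UNIV (\<lambda>p. F (fst p) (snd p))"
  shows "continuous_on UNIV (\<lambda>t. integral0 t (F t))"
  using continuous_on_integral_unit_interval_rescaled[OF F]
  by (auto simp: integral0_rescale[OF continuous_on_param_section[OF F]] intro!: continuous_intros)

lemma integral0_quotient_tendsto:
  fixes F :: "real \<Rightarrow> real \<Rightarrow> 'b::banach"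
  assumes F: "continuous_on UNIV (\<lambda>p. F (fst p) (snd p))"
  shows "((\<lambda>h. (1 / h) *\<^sub>R integral0 h (F h)) \<longlongrightarrow> F 0 0) (at 0)"
proof -
  have "isCont (\<lambda>h. integral {0..1} (\<lambda>u. F h (h * u))) 0"
    using continuous_on_integral_unit_interval_rescaled[OF F]
    by (simp add: continuous_on_eq_continuous_at)
  then have "((\<lambda>h. integral {0..1} (\<lambda>u. F h (h * u))) \<longlongrightarrow> F 0 0) (at 0)"
    by (simp add: isCont_def)
  then show ?thesis
    by (rule Lim_transform_within[OF _ zero_less_one])
      (simp add: integral0_rescale[OF continuous_on_param_section[OF F]])
qed

lemma closed_segment_0_abs_le:
  fixes s t :: real
  assumes "s \<in> closed_segment 0 t"
  shows "\<bar>s\<bar> \<le> \<bar>t\<bar>" "\<bar>t - s\<bar> \<le> \<bar>t\<bar>"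
  using assms by (auto simp: closed_segment_eq_real_ivl split: if_splits)

lemma continuous_bounded_symmetric_interval:
  fixes f :: "real \<Rightarrow> 'b::real_normed_vector"
  assumes "continuous_on UNIV f"
  obtains C where "0 \<le> C" "\<And>s. \<bar>s\<bar> \<le> a \<Longrightarrow> norm (f s) \<le> C"
proof -
  have "compact (f ` {-a..a})"
    by (rule compact_continuous_image[OF continuous_on_subset[OF assms]]) auto
  then obtain B where "B > 0" "\<And>x. x \<in> f ` {-a..a} \<Longrightarrow> norm x \<le> B"
    using compact_imp_bounded bounded_pos by metis
  then show ?thesis
    using that[of B] by (auto simp: abs_le_iff)
qed

section \<open>Volterra equations of the second kind\<close>

lemma has_integral_power_unit_interval:
  "((\<lambda>u::real. u ^ n) has_integral 1 / real (Suc n)) {0..1}"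
proof -
  have "((\<lambda>u::real. u ^ n) has_integral (1 ^ Suc n / real (Suc n) - 0 ^ Suc n / real (Suc n))) {0..1}"
  proof (rule fundamental_theorem_of_calculus)
    fix x :: real
    have "((\<lambda>u. u ^ Suc n / real (Suc n)) has_real_derivative real (Suc n) * x ^ n / real (Suc n))
        (at x within {0..1})"
      by (intro derivative_eq_intros) auto
    then show "((\<lambda>u. u ^ Suc n / real (Suc n)) has_vector_derivative x ^ n) (at x within {0..1})"
      by (simp add: has_real_derivative_iff_has_vector_derivative)
  qed simp
  then show ?thesis
    by simp
qed

definition volterra_conv :: "(real \<Rightarrow> 'b::{real_normed_field,banach}) \<Rightarrow> (real \<Rightarrow> 'b) \<Rightarrow> real \<Rightarrow> 'b"
  where "volterra_conv k g t = integral0 t (\<lambda>s. k (t - s) * g s)"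

primrec volterra_iter :: "(real \<Rightarrow> 'b::{real_normed_field,banach}) \<Rightarrow> (real \<Rightarrow> 'b) \<Rightarrow> nat \<Rightarrow> real \<Rightarrow> 'b"
  where
    "volterra_iter k f 0 = f"
  | "volterra_iter k f (Suc n) = (\<lambda>t. - volterra_conv k (volterra_iter k f n) t)"

definition volterra_sol :: "(real \<Rightarrow> 'b::{real_normed_field,banach}) \<Rightarrow> (real \<Rightarrow> 'b) \<Rightarrow> real \<Rightarrow> 'b"
  where "volterra_sol k f t = (\<Sum>n. volterra_iter k f n t)"

context
  fixes k :: "real \<Rightarrow> 'b::{real_normed_field,banach}"
  assumes k: "continuous_on UNIV k"
begin

lemma continuous_on_volterra_integrand:
  "continuous_on UNIV g \<Longrightarrow> continuous_on UNIV (\<lambda>s. k (t - s) * g s)"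
  by (intro continuous_intros continuous_on_compose2[OF k]) auto

lemma continuous_on_volterra_conv:
  assumes g: "continuous_on UNIV g"
  shows "continuous_on UNIV (volterra_conv k g)"
proof -
  have "continuous_on UNIV (\<lambda>p. k (fst p - snd p) * g (snd p))"
    by (intro continuous_intros continuous_on_compose2[OF k] continuous_on_compose2[OF g]) auto
  then show ?thesis
    using continuous_on_integral0_param[where F="\<lambda>t s. k (t - s) * g s"]
    by (simp add: volterra_conv_def[abs_def])
qed

lemma volterra_conv_add:
  "continuous_on UNIV g \<Longrightarrow> continuous_on UNIV h \<Longrightarrow>
    volterra_conv k (\<lambda>s. g s + h s) t = volterra_conv k g t + volterra_conv k h t"
  by (simp add: volterra_conv_def distrib_left integral0_add continuous_on_volterra_integrand)

lemma volterra_conv_diff: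
  "continuous_on UNIV g \<Longrightarrow> continuous_on UNIV h \<Longrightarrow>
    volterra_conv k (\<lambda>s. g s - h s) t = volterra_conv k g t - volterra_conv k h t"
  by (simp add: volterra_conv_def right_diff_distrib integral0_diff continuous_on_volterra_integrand)

lemma volterra_conv_mult:
  assumes "continuous_on UNIV g"
  shows "volterra_conv k (\<lambda>s. c * g s) t = c * volterra_conv k g t"
proof -
  have "c * volterra_conv k g t = integral0 t (\<lambda>s. c * (k (t - s) * g s))"
    unfolding volterra_conv_def
    by (rule integral0_linear[OF continuous_on_volterra_integrand[OF assms] bounded_linear_mult_right])
  then show ?thesis
    by (simp add: volterra_conv_def algebra_simps)
qed

lemma volterra_conv_sum:
  assumes "\<And>i. continuous_on UNIV (g i)"
  shows "volterra_conv k (\<lambda>s. \<Sum>i<(n::nat). g i s) t = (\<Sum>i<n. volterra_conv k (g i) t)"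
proof (induction n)
  case 0
  then show ?case
    by (simp add: volterra_conv_def integral0_def)
next
  case (Suc n)
  then show ?case
    by (simp add: volterra_conv_add assms continuous_on_sum)
qed

lemma norm_volterra_conv_le:
  assumes g: "continuous_on UNIV g"
    and K: "\<And>s. \<bar>s\<bar> \<le> \<bar>t\<bar> \<Longrightarrow> norm (k s) \<le> K"
    and B: "\<And>s. \<bar>s\<bar> \<le> \<bar>t\<bar> \<Longrightarrow> norm (g s) \<le> B"
  shows "norm (volterra_conv k g t) \<le> \<bar>t\<bar> * (K * B)"
  unfolding volterra_conv_def
proof (rule norm_integral0_le[OF continuous_on_volterra_integrand[OF g]])
  fix s
  assume "s \<in> closed_segment 0 t"
  then have "\<bar>t - s\<bar> \<le> \<bar>t\<bar>" "\<bar>s\<bar> \<le> \<bar>t\<bar>"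
    by (simp_all add: closed_segment_0_abs_le)
  moreover have "0 \<le> K"
    using K[of 0] order_trans[OF norm_ge_zero] by simp
  ultimately show "norm (k (t - s) * g s) \<le> K * B"
    unfolding norm_mult by (intro mult_mono K B norm_ge_zero)
qed

lemma norm_volterra_conv_power_le:
  assumes d: "continuous_on UNIV d"
    and K: "0 \<le> K" "\<And>s. \<bar>s\<bar> \<le> a \<Longrightarrow> norm (k s) \<le> K"
    and C: "0 \<le> C" "\<And>s. \<bar>s\<bar> \<le> a \<Longrightarrow> norm (d s) \<le> C * (K * \<bar>s\<bar>) ^ n / fact n"
    and t: "\<bar>t\<bar> \<le> a"
  shows "norm (volterra_conv k d t) \<le> C * (K * \<bar>t\<bar>) ^ Suc n / fact (Suc n)"
proof -
  define D where "D = K * C * (K * \<bar>t\<bar>) ^ n / fact n"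
  have "norm (integral {0..1} (\<lambda>u. k (t - t * u) * d (t * u))) \<le> integral {0..1::real} (\<lambda>u. D * u ^ n)"
  proof (rule Henstock_Kurzweil_Integration.integral_norm_bound_integral)
    show "(\<lambda>u. k (t - t * u) * d (t * u)) integrable_on {0..1}"
      by (intro integrable_continuous_interval continuous_intros continuous_on_compose2[OF k]
          continuous_on_compose2[OF d]) auto
    fix u :: real
    assume "u \<in> {0..1}"
    then have "t * u \<in> closed_segment 0 t"
      by (auto simp: closed_segment_def intro!: exI[of _ u])
    then have "\<bar>t - t * u\<bar> \<le> a" "\<bar>t * u\<bar> \<le> a"
      using closed_segment_0_abs_le[of "t * u" t] t by linarith+
    then have "norm (k (t - t * u) * d (t * u)) \<le> K * (C * (K * \<bar>t * u\<bar>) ^ n / fact n)"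
      unfolding norm_mult using K C by (intro mult_mono) auto
    also have "\<dots> = D * u ^ n"
      using \<open>u \<in> {0..1}\<close> by (simp add: D_def abs_mult power_mult_distrib)
    finally show "norm (k (t - t * u) * d (t * u)) \<le> D * u ^ n" .
  qed (intro integrable_continuous_interval continuous_intros)
  also have "integral {0..1::real} (\<lambda>u. D * u ^ n) = D / real (Suc n)"
    using has_integral_power_unit_interval[of n] by (simp add: integral_mult_right integral_unique)
  finally have "\<bar>t\<bar> * norm (integral {0..1} (\<lambda>u. k (t - t * u) * d (t * u))) \<le> \<bar>t\<bar> * (D / real (Suc n))"
    by (rule mult_left_mono) simp
  moreover have "integral0 t (\<lambda>s. k (t - s) * d s) = t *\<^sub>R integral {0..1} (\<lambda>u. k (t - t * u) * d (t * u))"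
    by (rule integral0_rescale[OF continuous_on_volterra_integrand[OF d]])
  ultimately show ?thesis
    by (simp add: volterra_conv_def D_def field_simps)
qed

lemma tendsto_volterra_conv_uniform:
  assumes G: "\<And>N. continuous_on UNIV (G N)" and g: "continuous_on UNIV g"
    and lim: "uniform_limit {-\<bar>t\<bar>..\<bar>t\<bar>} G g sequentially"
  shows "(\<lambda>N. volterra_conv k (G N) t) \<longlonglongrightarrow> volterra_conv k g t"
proof (rule tendstoI)
  fix e :: real
  assume "0 < e"
  obtain K where K: "0 \<le> K" "\<And>s. \<bar>s\<bar> \<le> \<bar>t\<bar> \<Longrightarrow> norm (k s) \<le> K"
    using continuous_bounded_symmetric_interval[OF k] by blast
  define e' where "e' = e / (\<bar>t\<bar> * K + 1)"
  have "0 < e'"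
    using \<open>0 < e\<close> K by (simp add: e'_def add_nonneg_pos)
  with lim have "\<forall>\<^sub>F N in sequentially. \<forall>s\<in>{-\<bar>t\<bar>..\<bar>t\<bar>}. dist (G N s) (g s) < e'"
    by (simp add: uniform_limit_iff)
  then show "\<forall>\<^sub>F N in sequentially. dist (volterra_conv k (G N) t) (volterra_conv k g t) < e"
  proof (rule eventually_mono)
    fix N
    assume close: "\<forall>s\<in>{-\<bar>t\<bar>..\<bar>t\<bar>}. dist (G N s) (g s) < e'"
    have "dist (volterra_conv k (G N) t) (volterra_conv k g t) = norm (volterra_conv k (\<lambda>s. G N s - g s) t)"
      by (simp add: dist_norm volterra_conv_diff G g)
    also have "\<dots> \<le> \<bar>t\<bar> * (K * e')"
      using close by (intro norm_volterra_conv_le K continuous_intros G g)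
        (auto simp: dist_norm less_imp_le abs_le_iff)
    also have "\<dots> = e * (\<bar>t\<bar> * K / (\<bar>t\<bar> * K + 1))"
      by (simp add: e'_def)
    also have "\<dots> < e * 1"
      using \<open>0 < e\<close> K by (intro mult_strict_left_mono) (simp_all add: divide_less_eq add_nonneg_pos)
    finally show "dist (volterra_conv k (G N) t) (volterra_conv k g t) < e"
      by simp
  qed
qed

context
  fixes f :: "real \<Rightarrow> 'b"
  assumes f: "continuous_on UNIV f"
begin

lemma continuous_on_volterra_iter: "continuous_on UNIV (volterra_iter k f n)"
  by (induction n) (auto simp: f intro!: continuous_intros continuous_on_volterra_conv)

lemma norm_volterra_iter_le:
  assumes K: "0 \<le> K" "\<And>s. \<bar>s\<bar> \<le> a \<Longrightarrow> norm (k s) \<le> K"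
    and C: "0 \<le> C" "\<And>s. \<bar>s\<bar> \<le> a \<Longrightarrow> norm (f s) \<le> C"
  shows "\<bar>s\<bar> \<le> a \<Longrightarrow> norm (volterra_iter k f n s) \<le> C * (K * \<bar>s\<bar>) ^ n / fact n"
proof (induction n arbitrary: s)
  case 0
  then show ?case
    using C by simp
next
  case (Suc n)
  then show ?case
    using norm_volterra_conv_power_le[OF continuous_on_volterra_iter K C(1) Suc.IH Suc.prems] by simp
qed

lemma uniform_limit_volterra_sol:
  "uniform_limit {-a..a} (\<lambda>N t. \<Sum>i<N. volterra_iter k f i t) (volterra_sol k f) sequentially"
proof -
  obtain K where K: "0 \<le> K" "\<And>s. \<bar>s\<bar> \<le> a \<Longrightarrow> norm (k s) \<le> K"
    using continuous_bounded_symmetric_interval[OF k] by blast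
  obtain C where C: "0 \<le> C" "\<And>s. \<bar>s\<bar> \<le> a \<Longrightarrow> norm (f s) \<le> C"
    using continuous_bounded_symmetric_interval[OF f] by blast
  show ?thesis
    unfolding volterra_sol_def[abs_def]
  proof (rule Weierstrass_m_test)
    show "summable (\<lambda>n. C * (inverse (fact n) * (K * a) ^ n))"
      by (intro summable_mult summable_exp)
    fix n s
    assume "s \<in> {-a..a}"
    then have s: "\<bar>s\<bar> \<le> a"
      by auto
    have "norm (volterra_iter k f n s) \<le> C * (K * \<bar>s\<bar>) ^ n / fact n"
      using norm_volterra_iter_le[OF K C s] .
    also have "\<dots> \<le> C * (inverse (fact n) * (K * a) ^ n)"
      using K C s by (auto simp: field_simps intro!: mult_left_mono power_mono mult_mono)
    finally show "norm (volterra_iter k f n s) \<le> C * (inverse (fact n) * (K * a) ^ n)" .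
  qed
qed

lemma continuous_on_volterra_sol: "continuous_on UNIV (volterra_sol k f)"
proof (rule continuous_at_imp_continuous_on, intro ballI)
  fix x :: real
  have "continuous_on {-(\<bar>x\<bar> + 1)..\<bar>x\<bar> + 1} (volterra_sol k f)"
    by (rule uniform_limit_theorem[OF _ uniform_limit_volterra_sol])
      (auto intro!: always_eventually continuous_on_sum continuous_on_subset[OF continuous_on_volterra_iter])
  moreover have "x \<in> interior {-(\<bar>x\<bar> + 1)..\<bar>x\<bar> + 1}"
    by auto
  ultimately show "isCont (volterra_sol k f) x"
    by (rule continuous_on_interior)
qed

lemma volterra_sol_eq: "volterra_sol k f t = f t - volterra_conv k (volterra_sol k f) t"
proof -
  define S where "S N t = (\<Sum>i<N. volterra_iter k f i t)" for N t
  have S: "continuous_on UNIV (S N)" for N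
    unfolding S_def by (intro continuous_on_sum continuous_on_volterra_iter)
  have "S (Suc N) t = f t - volterra_conv k (S N) t" for N
    unfolding S_def sum.lessThan_Suc_shift
    by (simp add: sum_negf volterra_conv_sum continuous_on_volterra_iter)
  moreover have "(\<lambda>N. volterra_conv k (S N) t) \<longlonglongrightarrow> volterra_conv k (volterra_sol k f) t"
    using uniform_limit_volterra_sol
    by (intro tendsto_volterra_conv_uniform S continuous_on_volterra_sol) (simp add: S_def[abs_def])
  ultimately have "(\<lambda>N. S (Suc N) t) \<longlonglongrightarrow> f t - volterra_conv k (volterra_sol k f) t"
    by (simp add: tendsto_diff)
  moreover have "(\<lambda>N. S (Suc N) t) \<longlonglongrightarrow> volterra_sol k f t"
    using tendsto_uniform_limitI[OF uniform_limit_volterra_sol, of t "\<bar>t\<bar>"]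
    by (intro LIMSEQ_Suc) (simp add: S_def[abs_def] abs_le_D1 abs_ge_minus_self minus_le_iff)
  ultimately show ?thesis
    using LIMSEQ_unique by metis
qed

lemma norm_volterra_sol_le:
  assumes K: "0 \<le> K" "\<And>s. \<bar>s\<bar> \<le> a \<Longrightarrow> norm (k s) \<le> K"
    and C: "0 \<le> C" "\<And>s. \<bar>s\<bar> \<le> a \<Longrightarrow> norm (f s) \<le> C"
    and t: "\<bar>t\<bar> \<le> a"
  shows "norm (volterra_sol k f t) \<le> C * exp (K * a)"
proof -
  have bound: "norm (volterra_iter k f n t) \<le> C * ((K * a) ^ n / fact n)" for n
  proof -
    have "norm (volterra_iter k f n t) \<le> C * (K * \<bar>t\<bar>) ^ n / fact n"
      by (rule norm_volterra_iter_le[OF K C t])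
    also have "\<dots> \<le> C * ((K * a) ^ n / fact n)"
      using K C t by (simp add: divide_right_mono mult_left_mono power_mono)
    finally show ?thesis .
  qed
  have exp: "(\<lambda>n. C * ((K * a) ^ n / fact n)) sums (C * exp (K * a))"
    using sums_mult[OF exp_converges[of "K * a"], of C] by (simp add: divide_inverse_commute)
  have "norm (volterra_sol k f t) \<le> (\<Sum>n. C * ((K * a) ^ n / fact n))"
    unfolding volterra_sol_def by (rule norm_suminf_le[OF bound sums_summable[OF exp]])
  also have "\<dots> = C * exp (K * a)"
    using exp by (rule sums_unique[symmetric])
  finally show ?thesis .
qed

end

lemma volterra_homogeneous_eq_0:
  assumes h: "continuous_on UNIV h" and eq: "\<And>t. h t = - volterra_conv k h t"
  shows "h t = 0"
proof -
  obtain K where K: "0 \<le> K" "\<And>s. \<bar>s\<bar> \<le> \<bar>t\<bar> \<Longrightarrow> norm (k s) \<le> K"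
    using continuous_bounded_symmetric_interval[OF k] by blast
  obtain C where C: "0 \<le> C" "\<And>s. \<bar>s\<bar> \<le> \<bar>t\<bar> \<Longrightarrow> norm (h s) \<le> C"
    using continuous_bounded_symmetric_interval[OF h] by blast
  have "\<bar>s\<bar> \<le> \<bar>t\<bar> \<Longrightarrow> norm (h s) \<le> C * (K * \<bar>s\<bar>) ^ n / fact n" for n s
  proof (induction n arbitrary: s)
    case 0
    then show ?case
      using C by simp
  next
    case (Suc n)
    then show ?case
      using norm_volterra_conv_power_le[OF h K C(1) Suc.IH Suc.prems] eq[of s] by simp
  qed
  then have "norm (h t) \<le> C * (inverse (fact n) * (K * \<bar>t\<bar>) ^ n)" for n
    by (simp add: field_simps)
  moreover have "(\<lambda>n. C * (inverse (fact n) * (K * \<bar>t\<bar>) ^ n)) \<longlonglongrightarrow> C * 0"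
    by (intro tendsto_intros summable_LIMSEQ_zero[OF summable_exp])
  ultimately have "norm (h t) \<le> C * 0"
    by (intro LIMSEQ_le_const) auto
  then show ?thesis
    by simp
qed

lemma volterra_sol_unique:
  assumes f: "continuous_on UNIV f" and g: "continuous_on UNIV g"
    and eq: "\<And>t. g t = f t - volterra_conv k g t"
  shows "volterra_sol k f = g"
proof
  fix t
  have "volterra_sol k f t - g t = 0"
  proof (rule volterra_homogeneous_eq_0[where h="\<lambda>t. volterra_sol k f t - g t"])
    show "continuous_on UNIV (\<lambda>t. volterra_sol k f t - g t)"
      by (intro continuous_intros continuous_on_volterra_sol f g)
    show "volterra_sol k f s - g s = - volterra_conv k (\<lambda>t. volterra_sol k f t - g t) s" for s
      using volterra_sol_eq[OF f, of s] eq[of s]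
      by (simp add: volterra_conv_diff continuous_on_volterra_sol f g)
  qed
  then show "volterra_sol k f t = g t"
    by simp
qed

end

section \<open>Strongly continuous groups\<close>

lemma norm_le_of_bounded_on_ball:
  fixes T :: "'a::real_normed_vector \<Rightarrow> 'b::real_normed_vector"
  assumes T: "bounded_linear T" and "r > 0" and ball: "\<And>x. x \<in> ball x0 r \<Longrightarrow> norm (T x) \<le> B"
  shows "norm (T y) \<le> 4 * B / r * norm y"
proof (cases "y = 0")
  case True
  then show ?thesis
    using linear_simps(3)[OF T] by simp
next
  case False
  define c where "c = r / 2 / norm y"
  have c: "c > 0"
    using \<open>r > 0\<close> False by (simp add: c_def)
  have "norm (c *\<^sub>R y) = r / 2"
    using False \<open>r > 0\<close> by (simp add: c_def)
  then have "norm (T (x0 + c *\<^sub>R y)) \<le> B" "norm (T x0) \<le> B"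
    using \<open>r > 0\<close> by (auto simp: dist_norm intro!: ball)
  moreover have "c *\<^sub>R T y = T (x0 + c *\<^sub>R y) - T x0"
    by (simp add: linear_simps[OF T])
  ultimately have "c * norm (T y) \<le> 2 * B"
    using norm_triangle_ineq4[of "T (x0 + c *\<^sub>R y)" "T x0"] c
    by (metis norm_scaleR abs_of_pos add_mono mult_2 order_trans)
  then show ?thesis
    using \<open>r > 0\<close> False c by (simp add: c_def field_simps)
qed

lemma uniform_boundedness:
  fixes T :: "'i \<Rightarrow> 'a::banach \<Rightarrow> 'b::real_normed_vector"
  assumes T: "\<And>i. bounded_linear (T i)" and pointwise: "\<And>x. \<exists>C. \<forall>i\<in>I. norm (T i x) \<le> C"
  obtains M where "0 \<le> M" "\<And>i x. i \<in> I \<Longrightarrow> norm (T i x) \<le> M * norm x"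
proof -
  define E where "E n = {x. \<forall>i\<in>I. norm (T i x) \<le> real n}" for n :: nat
  have closed_E: "closed (E n)" for n
  proof -
    have "E n = (\<Inter>i\<in>I. {x. norm (T i x) \<le> real n})"
      by (auto simp: E_def)
    then show ?thesis
      by (auto intro!: closed_INT closed_Collect_le continuous_intros bounded_linear.continuous_on[OF T])
  qed
  have cover: "(\<Union>n. E n) = UNIV"
  proof (intro set_eqI iffI)
    fix x :: 'a
    obtain C where "\<forall>i\<in>I. norm (T i x) \<le> C"
      using pointwise by blast
    then have "x \<in> E (nat \<lceil>C\<rceil>)"
      unfolding E_def using real_nat_ceiling_ge[of C] by force
    then show "x \<in> (\<Union>n. E n)"
      by blast
  qed auto
  have "\<exists>n. interior (E n) \<noteq> {}"
  proof (rule ccontr)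
    assume "\<not> ?thesis"
    then have "euclidean interior_of \<Union>(range E) = {}"
      by (intro Baire_category_alt) (auto simp: completely_metrizable_space_euclidean euclidean_interior_of
          closed_E closed_closedin[symmetric])
    then show False
      using cover by (simp add: euclidean_interior_of)
  qed
  then obtain n x0 r where r: "r > 0" "ball x0 r \<subseteq> E n"
    by (auto simp: mem_interior)
  have "norm (T i y) \<le> 4 * real n / r * norm y" if "i \<in> I" for i y
    using r that by (intro norm_le_of_bounded_on_ball[OF T]) (auto simp: E_def)
  then show ?thesis
    using that[of "4 * real n / r"] r by simp
qed

lemma sc_group_bounded_linear: "sc_group J S \<Longrightarrow> bounded_linear (S t)"
  by (simp add: sc_group_def bounded_clinear_op_def)

lemma sc_group_J: "sc_group J S \<Longrightarrow> S t (J x) = J (S t x)"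
  by (simp add: sc_group_def bounded_clinear_op_def)

lemma sc_group_0: "sc_group J S \<Longrightarrow> S 0 x = x"
  by (simp add: sc_group_def)

lemma sc_group_add: "sc_group J S \<Longrightarrow> S (s + t) x = S s (S t x)"
  by (simp add: sc_group_def)

lemma sc_group_continuous: "sc_group J S \<Longrightarrow> continuous_on UNIV (\<lambda>t. S t x)"
  by (simp add: sc_group_def)

lemma sc_group_uniform_bound:
  fixes S :: "real \<Rightarrow> 'a::banach \<Rightarrow> 'a"
  assumes S: "sc_group J S"
  obtains M where "0 \<le> M" "\<And>t x. \<bar>t\<bar> \<le> a \<Longrightarrow> norm (S t x) \<le> M * norm x"
proof -
  have "\<exists>C. \<forall>t\<in>{t. \<bar>t\<bar> \<le> a}. norm (S t x) \<le> C" for x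
  proof -
    obtain C where "\<And>t. \<bar>t\<bar> \<le> a \<Longrightarrow> norm (S t x) \<le> C"
      using continuous_bounded_symmetric_interval[OF sc_group_continuous[OF S]] by blast
    then show ?thesis
      by blast
  qed
  then show ?thesis
    by (rule uniform_boundedness[OF sc_group_bounded_linear[OF S]]) (rule that, simp_all)
qed

lemma generatorI:
  assumes "((\<lambda>h. (1 / h) *\<^sub>R (S h x - x)) \<longlongrightarrow> y) (at (0::real))"
  shows "x \<in> gen_dom S" "gen S x = y"
  using assms by (auto simp: gen_dom_def gen_def intro: tendsto_Lim)

lemma tendsto_generator:
  assumes "x \<in> gen_dom S"
  shows "((\<lambda>h. (1 / h) *\<^sub>R (S h x - x)) \<longlongrightarrow> gen S x) (at (0::real))"
  using assms generatorI(2)[of S x] by (auto simp: gen_dom_def)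

lemma has_vector_derivative_difference_quotient:
  fixes f :: "real \<Rightarrow> 'b::real_normed_vector"
  assumes "((\<lambda>h. (1 / h) *\<^sub>R (f (t + h) - f t)) \<longlongrightarrow> D) (at 0)"
  shows "(f has_vector_derivative D) (at t)"
  unfolding has_vector_derivative_def has_derivative_at
proof (intro conjI)
  show "bounded_linear (\<lambda>x. x *\<^sub>R D)"
    by (rule bounded_linear_scaleR_left)
  have "((\<lambda>h. norm ((1 / h) *\<^sub>R (f (t + h) - f t) - D)) \<longlongrightarrow> 0) (at 0)"
    using tendsto_norm[OF tendsto_diff[OF assms tendsto_const[of D]]] by simp
  then show "((\<lambda>h. norm (f (t + h) - f t - h *\<^sub>R D) / norm h) \<longlongrightarrow> 0) (at 0)"
  proof (rule Lim_transform_within[OF _ zero_less_one])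
    fix h :: real
    assume "0 < dist h 0"
    then have "(1 / h) *\<^sub>R (f (t + h) - f t) - D = (1 / h) *\<^sub>R (f (t + h) - f t - h *\<^sub>R D)"
      by (simp add: algebra_simps)
    then show "norm ((1 / h) *\<^sub>R (f (t + h) - f t) - D) = norm (f (t + h) - f t - h *\<^sub>R D) / norm h"
      by (simp add: divide_inverse_commute)
  qed
qed

lemma sc_group_has_vector_derivative:
  assumes S: "sc_group J S" and x: "x \<in> gen_dom S"
  shows "((\<lambda>t. S t x) has_vector_derivative S t (gen S x)) (at t)"
proof (rule has_vector_derivative_difference_quotient)
  have "((\<lambda>h. S t ((1 / h) *\<^sub>R (S h x - x))) \<longlongrightarrow> S t (gen S x)) (at 0)"
    by (rule bounded_linear.tendsto[OF sc_group_bounded_linear[OF S] tendsto_generator[OF x]])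
  then show "((\<lambda>h. (1 / h) *\<^sub>R (S (t + h) x - S t x)) \<longlongrightarrow> S t (gen S x)) (at 0)"
    by (simp add: linear_simps[OF sc_group_bounded_linear[OF S]] sc_group_add[OF S])
qed

lemma sc_group_diff_eq_integral0:
  assumes S: "sc_group J S" and x: "x \<in> gen_dom S"
  shows "S t x - x = integral0 t (\<lambda>s. S s (gen S x))"
proof (rule antiderivative_unique[where f="\<lambda>t. S t x - x"])
  show "((\<lambda>t. S t x - x) has_vector_derivative S t (gen S x)) (at t)" for t
    using sc_group_has_vector_derivative[OF S x, of t] by (auto intro: derivative_eq_intros)
  show "((\<lambda>t. integral0 t (\<lambda>s. S s (gen S x))) has_vector_derivative S t (gen S x)) (at t)" for t
    by (rule has_vector_derivative_integral0[OF sc_group_continuous[OF S]])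
qed (simp add: sc_group_0[OF S])

lemma sc_group_integral0_in_gen_dom:
  assumes S: "sc_group J S"
  shows "integral0 h (\<lambda>s. S s y) \<in> gen_dom S" "gen S (integral0 h (\<lambda>s. S s y)) = S h y - y"
proof -
  define F where "F s = S s y" for s
  have F: "continuous_on UNIV F"
    unfolding F_def by (rule sc_group_continuous[OF S])
  then have F': "continuous_on UNIV (\<lambda>s. F (r + s))" for r
    by (intro continuous_on_compose2[OF F]) (auto intro: continuous_intros)
  \<comment> \<open>S r shifts the integration window from [0, h] to [r, r + h]\<close>
  have eq: "S r (integral0 h F) - integral0 h F = integral0 r (\<lambda>s. F (h + s) - F s)" for r
  proof -
    have "S r (integral0 h F) = integral0 h (\<lambda>s. F (r + s))"
      using integral0_linear[OF F sc_group_bounded_linear[OF S]] by (simp add: F_def sc_group_add[OF S])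
    also have "\<dots> = integral0 (r + h) F - integral0 r F"
      using integral0_shift[OF F, of r h] by simp
    also have "integral0 (r + h) F = integral0 h F + integral0 r (\<lambda>s. F (h + s))"
      using integral0_shift[OF F, of h r] by (simp add: add.commute)
    finally show ?thesis
      by (simp add: integral0_diff[OF F' F])
  qed
  have "((\<lambda>r. (1 / r) *\<^sub>R integral0 r ((\<lambda>r s. F (h + s) - F s) r)) \<longlongrightarrow> F (h + 0) - F 0) (at 0)"
    by (rule integral0_quotient_tendsto) (intro continuous_intros continuous_on_compose2[OF F], auto)
  then have "((\<lambda>r. (1 / r) *\<^sub>R (S r (integral0 h F) - integral0 h F)) \<longlongrightarrow> S h y - y) (at 0)"
    by (simp add: eq F_def sc_group_0[OF S])
  then show "integral0 h (\<lambda>s. S s y) \<in> gen_dom S" "gen S (integral0 h (\<lambda>s. S s y)) = S h y - y"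
    using generatorI by (simp_all add: F_def[abs_def])
qed

lemma tendsto_integral0_orbit:
  fixes S :: "real \<Rightarrow> 'a::banach \<Rightarrow> 'a"
  assumes S: "sc_group J S" and g: "g \<longlonglongrightarrow> y"
  shows "(\<lambda>n. integral0 h (\<lambda>s. S s (g n))) \<longlonglongrightarrow> integral0 h (\<lambda>s. S s y)"
proof -
  obtain M where M: "0 \<le> M" "\<And>t x. \<bar>t\<bar> \<le> \<bar>h\<bar> \<Longrightarrow> norm (S t x) \<le> M * norm x"
    using sc_group_uniform_bound[OF S, of "\<bar>h\<bar>"] by metis
  have bound: "norm (integral0 h (\<lambda>s. S s (g n)) - integral0 h (\<lambda>s. S s y))
      \<le> \<bar>h\<bar> * (M * norm (g n - y))" for n
  proof -
    have "integral0 h (\<lambda>s. S s (g n)) - integral0 h (\<lambda>s. S s y) = integral0 h (\<lambda>s. S s (g n) - S s y)"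
      by (rule integral0_diff[OF sc_group_continuous[OF S] sc_group_continuous[OF S], symmetric])
    also have "\<dots> = integral0 h (\<lambda>s. S s (g n - y))"
      by (simp add: linear_simps[OF sc_group_bounded_linear[OF S]])
    also have "norm \<dots> \<le> \<bar>h\<bar> * (M * norm (g n - y))"
    proof (rule norm_integral0_le[OF sc_group_continuous[OF S]])
      fix s
      assume "s \<in> closed_segment 0 h"
      then show "norm (S s (g n - y)) \<le> M * norm (g n - y)"
        by (intro M(2) closed_segment_0_abs_le(1))
    qed
    finally show ?thesis .
  qed
  have "(\<lambda>n. \<bar>h\<bar> * (M * norm (g n - y))) \<longlonglongrightarrow> 0"
    using tendsto_mult_right_zero[OF tendsto_mult_right_zero[OF tendsto_norm_zero[OF LIM_zero[OF g]]]] .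
  moreover have "\<forall>\<^sub>F n in sequentially. norm (integral0 h (\<lambda>s. S s (g n)) - integral0 h (\<lambda>s. S s y))
      \<le> \<bar>h\<bar> * (M * norm (g n - y))"
    using bound by (intro always_eventually allI)
  ultimately have "(\<lambda>n. integral0 h (\<lambda>s. S s (g n)) - integral0 h (\<lambda>s. S s y)) \<longlonglongrightarrow> 0"
    by (rule Lim_null_comparison[rotated])
  then show ?thesis
    by (rule LIM_zero_cancel)
qed

lemma sc_group_closed_graph:
  fixes S :: "real \<Rightarrow> 'a::banach \<Rightarrow> 'a"
  assumes S: "sc_group J S"
  shows "closed (op_graph (gen_dom S) (gen S))"
  unfolding closed_sequential_limits
proof (intro allI impI, elim conjE)
  fix p :: "nat \<Rightarrow> 'a \<times> 'a" and l
  assume graph: "\<forall>n. p n \<in> op_graph (gen_dom S) (gen S)" and lim: "p \<longlonglongrightarrow> l"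
  obtain a b where l: "l = (a, b)"
    by (cases l)
  define u where "u n = fst (p n)" for n
  have u: "u n \<in> gen_dom S" "p n = (u n, gen S (u n))" for n
  proof -
    obtain x where "p n = (x, gen S x)" "x \<in> gen_dom S"
      using graph by (auto simp: op_graph_def)
    then show "u n \<in> gen_dom S" "p n = (u n, gen S (u n))"
      by (simp_all add: u_def)
  qed
  have ua: "u \<longlonglongrightarrow> a"
    unfolding u_def using tendsto_fst[OF lim] l by simp
  have gb: "(\<lambda>n. gen S (u n)) \<longlonglongrightarrow> b"
    using tendsto_snd[OF lim] l u(2) by simp
  have key: "S h a - a = integral0 h (\<lambda>s. S s b)" for h
  proof -
    have "(\<lambda>n. S h (u n) - u n) \<longlonglongrightarrow> S h a - a"
      by (intro tendsto_intros bounded_linear.tendsto[OF sc_group_bounded_linear[OF S]] ua)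
    then have "(\<lambda>n. integral0 h (\<lambda>s. S s (gen S (u n)))) \<longlonglongrightarrow> S h a - a"
      by (simp add: sc_group_diff_eq_integral0[OF S u(1)])
    then show ?thesis
      using tendsto_integral0_orbit[OF S gb] by (rule LIMSEQ_unique)
  qed
  have "continuous_on UNIV (\<lambda>p. S (snd p) b)"
    by (intro continuous_on_compose2[OF sc_group_continuous[OF S]] continuous_intros) auto
  then have "((\<lambda>h. (1 / h) *\<^sub>R integral0 h (\<lambda>s. S s b)) \<longlongrightarrow> b) (at 0)"
    using integral0_quotient_tendsto[where F="\<lambda>h s. S s b"] by (simp add: sc_group_0[OF S])
  then have "((\<lambda>h. (1 / h) *\<^sub>R (S h a - a)) \<longlongrightarrow> b) (at 0)"
    by (simp add: key)
  then show "l \<in> op_graph (gen_dom S) (gen S)"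
    using generatorI[of S a b] by (auto simp: op_graph_def l)
qed

lemma sc_group_invariant_functional:
  fixes S :: "real \<Rightarrow> 'a::banach \<Rightarrow> 'a"
  assumes S: "sc_group J S" and \<psi>: "linear \<psi>"
    and annihilates: "\<And>x. x \<in> gen_dom S \<Longrightarrow> \<psi> (gen S x) = 0"
  shows "\<psi> (S t y) = \<psi> y"
proof -
  have "\<psi> (S t y - y) = \<psi> (gen S (integral0 t (\<lambda>s. S s y)))"
    by (simp add: sc_group_integral0_in_gen_dom(2)[OF S])
  also have "\<dots> = 0"
    by (rule annihilates[OF sc_group_integral0_in_gen_dom(1)[OF S]])
  finally have "\<psi> (S t y - y) = 0" .
  then show ?thesis
    by (simp add: linear_diff[OF \<psi>])
qed

lemma sc_group_compression:
  assumes S: "sc_group J S" and J: "linear J" and P: "bounded_clinear_op J P"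
    and idem: "\<And>x. P (P x) = P x" and PSQ: "\<And>t x. P (S t (x - P x)) = 0"
  shows "sc_group J (\<lambda>t x. S t (x - P x) + P x)"
    and "gen_dom (\<lambda>t x. S t (x - P x) + P x) = {x. x - P x \<in> gen_dom S}"
    and "gen (\<lambda>t x. S t (x - P x) + P x) x = gen S (x - P x)"
proof -
  have P_lin: "bounded_linear P" and PJ: "\<And>x. P (J x) = J (P x)"
    using P by (simp_all add: bounded_clinear_op_def)
  show "sc_group J (\<lambda>t x. S t (x - P x) + P x)"
    unfolding sc_group_def bounded_clinear_op_def
  proof (intro conjI allI)
    show "bounded_linear (\<lambda>x. S t (x - P x) + P x)" for t
      by (intro bounded_linear_add bounded_linear_compose[OF sc_group_bounded_linear[OF S]]
          bounded_linear_sub bounded_linear_ident P_lin)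
    have "J x - P (J x) = J (x - P x)" for x
      by (simp add: PJ linear_diff[OF J])
    then show "S t (J x - P (J x)) + P (J x) = J (S t (x - P x) + P x)" for t x
      by (simp add: PJ linear_add[OF J] sc_group_J[OF S])
    show "(\<lambda>x. S 0 (x - P x) + P x) = id"
      by (simp add: fun_eq_iff sc_group_0[OF S])
    show "(\<lambda>x. S (s + t) (x - P x) + P x) = (\<lambda>x. S s (x - P x) + P x) \<circ> (\<lambda>x. S t (x - P x) + P x)" for s t
      by (simp add: fun_eq_iff linear_add[OF bounded_linear.linear[OF P_lin]] PSQ idem sc_group_add[OF S])
    show "continuous_on UNIV (\<lambda>t. S t (x - P x) + P x)" for x
      by (intro continuous_intros sc_group_continuous[OF S])
  qed
  have quotient: "(\<lambda>h. (1 / h) *\<^sub>R (S h (x - P x) + P x - x)) = (\<lambda>h. (1 / h) *\<^sub>R (S h (x - P x) - (x - P x)))" for x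
    by (simp add: algebra_simps)
  show "gen_dom (\<lambda>t x. S t (x - P x) + P x) = {x. x - P x \<in> gen_dom S}"
    by (simp add: gen_dom_def quotient)
  show "gen (\<lambda>t x. S t (x - P x) + P x) x = gen S (x - P x)"
    by (simp add: gen_def quotient)
qed


section \<open>Rank-one perturbations of a generator\<close>

lemma cscale_of_real [simp]: "cscale J (complex_of_real r) x = r *\<^sub>R x"
  by (simp add: cscale_def)

lemma cscale_0 [simp]: "cscale J 0 x = 0"
  by (simp add: cscale_def)

lemma cscale_add_left: "cscale J (c + d) x = cscale J c x + cscale J d x"
  by (simp add: cscale_def scaleR_add_left)

lemma bounded_clinear_op_cscale:
  "bounded_clinear_op J T \<Longrightarrow> T (cscale J c x) = cscale J c (T x)"
  by (simp add: bounded_clinear_op_def cscale_def linear_simps)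

locale complex_structure =
  fixes J :: "'a::real_normed_vector \<Rightarrow> 'a"
  assumes bounded_linear_J: "bounded_linear J" and J_J [simp]: "J (J x) = - x"
begin

lemma linear_J: "linear J"
  using bounded_linear_J by (rule bounded_linear.linear)

lemma bounded_linear_cscale: "bounded_linear (cscale J c)"
  unfolding cscale_def[abs_def]
  by (intro bounded_linear_add bounded_linear_scaleR_right
      bounded_linear_compose[OF bounded_linear_scaleR_right bounded_linear_J])

lemma bounded_linear_cscale_left: "bounded_linear (\<lambda>c. cscale J c v)"
  unfolding cscale_def
  by (intro bounded_linear_add bounded_linear_compose[OF bounded_linear_scaleR_left bounded_linear_Re]
      bounded_linear_compose[OF bounded_linear_scaleR_left bounded_linear_Im])

lemma cscale_cscale: "cscale J c (cscale J d x) = cscale J (c * d) x"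
  by (simp add: cscale_def linear_simps[OF bounded_linear_J] algebra_simps scaleR_add_left scaleR_diff_left)

lemma J_cscale: "J (cscale J c x) = cscale J (\<i> * c) x"
  by (simp add: cscale_def linear_simps[OF bounded_linear_J] algebra_simps)

lemma norm_cscale_le: "norm (cscale J c v) \<le> cmod c * (norm v + norm (J v))"
proof -
  have "norm (cscale J c v) \<le> \<bar>Re c\<bar> * norm v + \<bar>Im c\<bar> * norm (J v)"
    unfolding cscale_def using norm_triangle_ineq[of "Re c *\<^sub>R v" "Im c *\<^sub>R J v"] by simp
  also have "\<dots> \<le> cmod c * norm v + cmod c * norm (J v)"
    by (intro add_mono mult_right_mono abs_Re_le_cmod abs_Im_le_cmod) auto
  finally show ?thesis
    by (simp add: distrib_left)
qed

lemma tendsto_cscale [tendsto_intros]: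
  "(f \<longlongrightarrow> c) F \<Longrightarrow> (g \<longlongrightarrow> x) F \<Longrightarrow> ((\<lambda>t. cscale J (f t) (g t)) \<longlongrightarrow> cscale J c x) F"
  unfolding cscale_def by (intro tendsto_intros bounded_linear.tendsto[OF bounded_linear_J])

lemma continuous_on_cscale [continuous_intros]:
  "continuous_on S f \<Longrightarrow> continuous_on S g \<Longrightarrow> continuous_on S (\<lambda>t. cscale J (f t) (g t))"
  unfolding continuous_on_def by (auto intro: tendsto_cscale)

end

locale rank_one_perturbation = complex_structure J
  for J :: "'a::banach \<Rightarrow> 'a" +
  fixes U :: "real \<Rightarrow> 'a \<Rightarrow> 'a" and \<phi> :: "'a \<Rightarrow> complex" and z :: 'a
  assumes U: "sc_group J U" and bounded_linear_\<phi>: "bounded_linear \<phi>" and \<phi>_J: "\<phi> (J x) = \<i> * \<phi> x"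
begin

definition kernel :: "real \<Rightarrow> complex"
  where "kernel r = \<phi> (U r z)"

text \<open>The perturbed group T solves Duhamel's formula
  T t x = U t x - integral0 t (\<lambda>s. cscale J (\<phi> (T s x)) (U (t - s) z));
  applying \<phi> turns it into a scalar Volterra equation for coeff x s = \<phi> (T s x).\<close>

definition coeff :: "'a \<Rightarrow> real \<Rightarrow> complex"
  where "coeff x = volterra_sol kernel (\<lambda>t. \<phi> (U t x))"

definition perturbed :: "real \<Rightarrow> 'a \<Rightarrow> 'a"
  where "perturbed t x = U t x - integral0 t (\<lambda>s. cscale J (coeff x s) (U (t - s) z))"

lemma \<phi>_cscale: "\<phi> (cscale J c x) = c * \<phi> x"
proof -
  have "\<phi> (cscale J c x) = (Re c + \<i> * Im c) * \<phi> x"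
    by (simp add: cscale_def linear_simps[OF bounded_linear_\<phi>] \<phi>_J scaleR_conv_of_real algebra_simps)
  also have "Re c + \<i> * Im c = c"
    by (simp add: complex_eq_iff)
  finally show ?thesis .
qed

lemma continuous_on_\<phi> [continuous_intros]: "continuous_on S f \<Longrightarrow> continuous_on S (\<lambda>t. \<phi> (f t))"
  by (rule bounded_linear.continuous_on[OF bounded_linear_\<phi>])

lemma continuous_on_orbit [continuous_intros]:
  "continuous_on S f \<Longrightarrow> continuous_on S (\<lambda>t. U (f t) x)"
  by (rule continuous_on_compose2[OF sc_group_continuous[OF U]]) auto

lemma continuous_on_kernel: "continuous_on UNIV kernel"
  unfolding kernel_def[abs_def] by (intro continuous_intros)

lemma continuous_on_coeff: "continuous_on UNIV (coeff x)"
  unfolding coeff_def by (intro continuous_on_volterra_sol continuous_on_kernel continuous_intros)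

lemma coeff_eq: "coeff x t = \<phi> (U t x) - volterra_conv kernel (coeff x) t"
  unfolding coeff_def by (intro volterra_sol_eq continuous_on_kernel continuous_intros)

lemma coeff_unique:
  "continuous_on UNIV g \<Longrightarrow> (\<And>t. g t = \<phi> (U t x) - volterra_conv kernel g t) \<Longrightarrow> coeff x = g"
  unfolding coeff_def by (intro volterra_sol_unique continuous_on_kernel continuous_intros)

lemma continuous_on_duhamel_integrand:
  "continuous_on UNIV g \<Longrightarrow> continuous_on UNIV (\<lambda>s. cscale J (g s) (U (t - s) z))"
  by (intro continuous_intros)

lemma integral0_duhamel_linear:
  assumes "continuous_on UNIV g" "bounded_linear h"
  shows "h (integral0 t (\<lambda>s. cscale J (g s) (U (t - s) z))) = integral0 t (\<lambda>s. h (cscale J (g s) (U (t - s) z)))"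
  using assms by (intro integral0_linear continuous_on_duhamel_integrand)

lemma \<phi>_integral0_duhamel:
  "continuous_on UNIV g \<Longrightarrow> \<phi> (integral0 t (\<lambda>s. cscale J (g s) (U (t - s) z))) = volterra_conv kernel g t"
  by (simp add: integral0_duhamel_linear bounded_linear_\<phi> \<phi>_cscale volterra_conv_def kernel_def mult.commute)

lemma \<phi>_perturbed: "\<phi> (perturbed t x) = coeff x t"
  using coeff_eq[of x t]
  by (simp add: perturbed_def linear_simps[OF bounded_linear_\<phi>] \<phi>_integral0_duhamel continuous_on_coeff)

lemma continuous_on_perturbed: "continuous_on UNIV (\<lambda>t. perturbed t x)"
proof -
  have "continuous_on UNIV (\<lambda>p. cscale J (coeff x (snd p)) (U (fst p - snd p) z))"
    by (intro continuous_intros continuous_on_compose2[OF continuous_on_coeff]) auto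
  then have "continuous_on UNIV (\<lambda>t. integral0 t (\<lambda>s. cscale J (coeff x s) (U (t - s) z)))"
    using continuous_on_integral0_param[where F="\<lambda>t s. cscale J (coeff x s) (U (t - s) z)"] by simp
  then show ?thesis
    unfolding perturbed_def[abs_def] by (intro continuous_intros)
qed

lemma perturbed_0: "perturbed 0 x = x"
  by (simp add: perturbed_def sc_group_0[OF U])

lemma coeff_add: "coeff (x + y) = (\<lambda>t. coeff x t + coeff y t)"
proof (rule coeff_unique)
  show "continuous_on UNIV (\<lambda>t. coeff x t + coeff y t)"
    by (intro continuous_intros continuous_on_coeff)
  show "coeff x t + coeff y t = \<phi> (U t (x + y)) - volterra_conv kernel (\<lambda>t. coeff x t + coeff y t) t" for t
    using coeff_eq[of x t] coeff_eq[of y t]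
    by (simp add: linear_simps[OF sc_group_bounded_linear[OF U]] linear_simps[OF bounded_linear_\<phi>]
        volterra_conv_add[OF continuous_on_kernel continuous_on_coeff continuous_on_coeff])
qed

lemma coeff_cscale: "coeff (cscale J c x) = (\<lambda>t. c * coeff x t)"
proof (rule coeff_unique)
  show "continuous_on UNIV (\<lambda>t. c * coeff x t)"
    by (intro continuous_intros continuous_on_coeff)
  have "U t (cscale J c x) = cscale J c (U t x)" for t
    using U by (simp add: sc_group_def bounded_clinear_op_cscale)
  then show "c * coeff x t = \<phi> (U t (cscale J c x)) - volterra_conv kernel (\<lambda>t. c * coeff x t) t" for t
    using coeff_eq[of x t]
    by (simp add: \<phi>_cscale volterra_conv_mult[OF continuous_on_kernel continuous_on_coeff] right_diff_distrib)
qed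

lemma perturbed_add: "perturbed t (x + y) = perturbed t x + perturbed t y"
  by (simp add: perturbed_def coeff_add cscale_add_left linear_simps[OF sc_group_bounded_linear[OF U]]
      integral0_add continuous_on_duhamel_integrand continuous_on_coeff)

lemma perturbed_cscale: "perturbed t (cscale J c x) = cscale J c (perturbed t x)"
proof -
  have "U t (cscale J c x) = cscale J c (U t x)"
    using U by (simp add: sc_group_def bounded_clinear_op_cscale)
  moreover have "integral0 t (\<lambda>s. cscale J (coeff (cscale J c x) s) (U (t - s) z))
      = cscale J c (integral0 t (\<lambda>s. cscale J (coeff x s) (U (t - s) z)))"
    by (simp add: coeff_cscale cscale_cscale[symmetric] integral0_duhamel_linear bounded_linear_cscale
        continuous_on_coeff)
  ultimately show ?thesis
    by (simp add: perturbed_def linear_simps[OF bounded_linear_cscale])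
qed

lemma norm_coeff_le:
  obtains C where "0 \<le> C" "\<And>x s. \<bar>s\<bar> \<le> a \<Longrightarrow> cmod (coeff x s) \<le> C * norm x"
proof -
  obtain M where M: "0 \<le> M" "\<And>s x. \<bar>s\<bar> \<le> a \<Longrightarrow> norm (U s x) \<le> M * norm x"
    using sc_group_uniform_bound[OF U, of a] by metis
  obtain B where B: "0 < B" "\<And>y. norm (\<phi> y) \<le> norm y * B"
    using bounded_linear.pos_bounded[OF bounded_linear_\<phi>] by blast
  obtain K where K: "0 \<le> K" "\<And>s. \<bar>s\<bar> \<le> a \<Longrightarrow> cmod (kernel s) \<le> K"
    using continuous_bounded_symmetric_interval[OF continuous_on_kernel] by blast
  have "cmod (coeff x s) \<le> B * M * exp (K * a) * norm x" if "\<bar>s\<bar> \<le> a" for x s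
  proof -
    have "cmod (\<phi> (U r x)) \<le> B * M * norm x" if "\<bar>r\<bar> \<le> a" for r
      using B(2)[of "U r x"] M(2)[OF that, of x] B(1) by (auto simp: algebra_simps intro: order_trans)
    then have "cmod (coeff x s) \<le> B * M * norm x * exp (K * a)"
      unfolding coeff_def using B M \<open>\<bar>s\<bar> \<le> a\<close>
      by (intro norm_volterra_sol_le continuous_on_kernel K continuous_intros) auto
    then show ?thesis
      by (simp add: ac_simps)
  qed
  then show ?thesis
    using that[of "B * M * exp (K * a)"] B(1) M(1) by simp
qed

lemma norm_perturbed_le: "\<exists>C. \<forall>x. norm (perturbed t x) \<le> norm x * C"
proof -
  obtain M where M: "0 \<le> M" "\<And>s x. \<bar>s\<bar> \<le> \<bar>t\<bar> \<Longrightarrow> norm (U s x) \<le> M * norm x"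
    using sc_group_uniform_bound[OF U, of "\<bar>t\<bar>"] by metis
  obtain G where G: "0 \<le> G" "\<And>x s. \<bar>s\<bar> \<le> \<bar>t\<bar> \<Longrightarrow> cmod (coeff x s) \<le> G * norm x"
    using norm_coeff_le[of "\<bar>t\<bar>"] by metis
  have "continuous_on UNIV (\<lambda>r. norm (U r z) + norm (J (U r z)))"
    by (intro continuous_intros bounded_linear.continuous_on[OF bounded_linear_J])
  then obtain Z where Z: "\<And>r. \<bar>r\<bar> \<le> \<bar>t\<bar> \<Longrightarrow> norm (norm (U r z) + norm (J (U r z))) \<le> Z"
    using continuous_bounded_symmetric_interval[where a="\<bar>t\<bar>"] by blast
  have "norm (integral0 t (\<lambda>s. cscale J (coeff x s) (U (t - s) z))) \<le> \<bar>t\<bar> * (G * norm x * Z)" for x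
  proof (rule norm_integral0_le[OF continuous_on_duhamel_integrand[OF continuous_on_coeff]])
    fix s
    assume "s \<in> closed_segment 0 t"
    then have s: "\<bar>s\<bar> \<le> \<bar>t\<bar>" "\<bar>t - s\<bar> \<le> \<bar>t\<bar>"
      by (simp_all add: closed_segment_0_abs_le)
    have "norm (cscale J (coeff x s) (U (t - s) z))
        \<le> cmod (coeff x s) * (norm (U (t - s) z) + norm (J (U (t - s) z)))"
      by (rule norm_cscale_le)
    also have "\<dots> \<le> G * norm x * Z"
      using G(2)[OF s(1)] Z[OF s(2)] G(1) by (intro mult_mono) auto
    finally show "norm (cscale J (coeff x s) (U (t - s) z)) \<le> G * norm x * Z" .
  qed
  then have "norm (perturbed t x) \<le> M * norm x + \<bar>t\<bar> * (G * norm x * Z)" for x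
    using M(2)[of t x] norm_triangle_ineq4[of "U t x"] unfolding perturbed_def
    by (meson add_mono order_trans order_refl)
  then have "norm (perturbed t x) \<le> norm x * (M + \<bar>t\<bar> * G * Z)" for x
    by (simp add: algebra_simps)
  then show ?thesis
    by blast
qed

lemma bounded_linear_perturbed: "bounded_linear (perturbed t)"
proof -
  have "perturbed t (r *\<^sub>R x) = r *\<^sub>R perturbed t x" for r x
    using perturbed_cscale[of t "complex_of_real r" x] by simp
  moreover obtain C where "\<And>x. norm (perturbed t x) \<le> norm x * C"
    using norm_perturbed_le[of t] by blast
  ultimately show ?thesis
    by (intro bounded_linear_intro[of _ C] perturbed_add)
qed

lemma perturbed_shift:
  "perturbed (s + t) x = U t (perturbed s x) - integral0 t (\<lambda>r. cscale J (coeff x (s + r)) (U (t - r) z))"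
proof -
  define F where "F r = cscale J (coeff x r) (U (s + t - r) z)" for r
  have F: "continuous_on UNIV F"
    unfolding F_def by (intro continuous_on_duhamel_integrand continuous_on_coeff)
  have "F = (\<lambda>r. U t (cscale J (coeff x r) (U (s - r) z)))"
    using U sc_group_add[OF U, of t "s - _" z]
    by (simp add: fun_eq_iff F_def sc_group_def bounded_clinear_op_cscale algebra_simps)
  then have "integral0 s F = U t (integral0 s (\<lambda>r. cscale J (coeff x r) (U (s - r) z)))"
    by (simp add: integral0_duhamel_linear sc_group_bounded_linear[OF U] continuous_on_coeff)
  moreover have "integral0 (s + t) F = integral0 s F + integral0 t (\<lambda>r. cscale J (coeff x (s + r)) (U (t - r) z))"
    using integral0_shift[OF F] by (simp add: F_def)
  ultimately show ?thesis
    using sc_group_add[OF U, of t s x]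
    by (simp add: perturbed_def F_def[symmetric] add.commute linear_simps[OF sc_group_bounded_linear[OF U]])
qed

lemma coeff_perturbed: "coeff (perturbed s x) = (\<lambda>r. coeff x (s + r))"
proof (rule coeff_unique)
  show shifted: "continuous_on UNIV (\<lambda>r. coeff x (s + r))"
    by (intro continuous_on_compose2[OF continuous_on_coeff] continuous_intros) auto
  show "coeff x (s + t) = \<phi> (U t (perturbed s x)) - volterra_conv kernel (\<lambda>r. coeff x (s + r)) t" for t
    using \<phi>_perturbed[of "s + t" x] \<phi>_integral0_duhamel[OF shifted, of t]
    by (simp add: perturbed_shift linear_simps[OF bounded_linear_\<phi>])
qed

lemma perturbed_perturbed: "perturbed t (perturbed s x) = perturbed (s + t) x"
  by (simp add: perturbed_shift perturbed_def[of t "perturbed s x"] coeff_perturbed)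

lemma sc_group_perturbed: "sc_group J perturbed"
  unfolding sc_group_def bounded_clinear_op_def
proof (intro conjI allI)
  show "bounded_linear (perturbed t)" for t
    by (rule bounded_linear_perturbed)
  show "perturbed t (J x) = J (perturbed t x)" for t x
    using perturbed_cscale[of t \<i> x] by (simp add: cscale_def)
  show "perturbed 0 = id"
    by (simp add: fun_eq_iff perturbed_0)
  show "perturbed (s + t) = perturbed s \<circ> perturbed t" for s t
    by (simp add: fun_eq_iff perturbed_perturbed add.commute)
  show "continuous_on UNIV (\<lambda>t. perturbed t x)" for x
    by (rule continuous_on_perturbed)
qed

lemma tendsto_duhamel_quotient:
  "((\<lambda>h. (1 / h) *\<^sub>R integral0 h (\<lambda>s. cscale J (coeff x s) (U (h - s) z))) \<longlongrightarrow> cscale J (\<phi> x) z) (at 0)"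
proof -
  have "continuous_on UNIV (\<lambda>p. cscale J (coeff x (snd p)) (U (fst p - snd p) z))"
    by (intro continuous_intros continuous_on_compose2[OF continuous_on_coeff]) auto
  then have "((\<lambda>h. (1 / h) *\<^sub>R integral0 h (\<lambda>s. cscale J (coeff x s) (U (h - s) z)))
      \<longlongrightarrow> cscale J (coeff x 0) (U 0 z)) (at 0)"
    using integral0_quotient_tendsto[where F="\<lambda>h s. cscale J (coeff x s) (U (h - s) z)"] by simp
  moreover have "coeff x 0 = \<phi> x"
    using \<phi>_perturbed[of 0 x] by (simp add: perturbed_0)
  ultimately show ?thesis
    by (simp add: sc_group_0[OF U])
qed

lemma perturbed_quotient:
  "(1 / h) *\<^sub>R (perturbed h x - x)
    = (1 / h) *\<^sub>R (U h x - x) - (1 / h) *\<^sub>R integral0 h (\<lambda>s. cscale J (coeff x s) (U (h - s) z))"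
  by (simp add: perturbed_def algebra_simps)

lemma gen_dom_perturbed: "gen_dom perturbed = gen_dom U"
proof (intro set_eqI iffI)
  fix x
  assume "x \<in> gen_dom perturbed"
  then have "((\<lambda>h. (1 / h) *\<^sub>R (perturbed h x - x)
      + (1 / h) *\<^sub>R integral0 h (\<lambda>s. cscale J (coeff x s) (U (h - s) z)))
      \<longlongrightarrow> gen perturbed x + cscale J (\<phi> x) z) (at 0)"
    by (intro tendsto_add tendsto_generator tendsto_duhamel_quotient)
  then show "x \<in> gen_dom U"
    by (intro generatorI(1)) (simp add: perturbed_quotient)
next
  fix x
  assume "x \<in> gen_dom U"
  then have "((\<lambda>h. (1 / h) *\<^sub>R (U h x - x)
      - (1 / h) *\<^sub>R integral0 h (\<lambda>s. cscale J (coeff x s) (U (h - s) z)))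
      \<longlongrightarrow> gen U x - cscale J (\<phi> x) z) (at 0)"
    by (intro tendsto_diff tendsto_generator tendsto_duhamel_quotient)
  then show "x \<in> gen_dom perturbed"
    by (intro generatorI(1)) (simp add: perturbed_quotient)
qed

lemma gen_perturbed:
  assumes "x \<in> gen_dom U"
  shows "gen perturbed x = gen U x - cscale J (\<phi> x) z"
proof -
  have "((\<lambda>h. (1 / h) *\<^sub>R (U h x - x)
      - (1 / h) *\<^sub>R integral0 h (\<lambda>s. cscale J (coeff x s) (U (h - s) z)))
      \<longlongrightarrow> gen U x - cscale J (\<phi> x) z) (at 0)"
    using assms by (intro tendsto_diff tendsto_generator tendsto_duhamel_quotient)
  then show ?thesis
    by (intro generatorI(2)) (simp add: perturbed_quotient)
qed

end

section \<open>Compression to the orthogonal complement of z\<close>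

locale complex_hilbert_space =
  fixes J :: "'a::banach \<Rightarrow> 'a" and ip :: "'a \<Rightarrow> 'a \<Rightarrow> complex"
  assumes complex_hilbert: "complex_hilbert J ip"
begin

sublocale complex_structure J
  using complex_hilbert unfolding complex_hilbert_def by (intro complex_structure.intro) blast+

lemma ip_add: "ip (x + y) w = ip x w + ip y w"
  and ip_cscale: "ip (cscale J c x) y = c * ip x y"
  and ip_cnj: "ip x y = cnj (ip y x)"
  and ip_self: "ip x x = complex_of_real ((norm x)\<^sup>2)"
  using complex_hilbert unfolding complex_hilbert_def by blast+

lemma ip_scaleR: "ip (r *\<^sub>R x) y = r * ip x y"
  using ip_cscale[of "complex_of_real r" x y] by simp

lemma ip_diff: "ip (x - y) w = ip x w - ip y w"
  using ip_add[of x "- y" w] ip_scaleR[of "-1" y w] by simp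

lemma ip_J: "ip (J x) y = \<i> * ip x y"
  using ip_cscale[of \<i> x y] by (simp add: cscale_def)

lemma ip_add_right: "ip x (y + w) = ip x y + ip x w"
  by (metis ip_cnj ip_add complex_cnj_add)

lemma norm_add_power2: "(norm (x + y))\<^sup>2 = (norm x)\<^sup>2 + (norm y)\<^sup>2 + 2 * Re (ip x y)"
proof -
  have "ip (x + y) (x + y) = ip x x + ip y y + (ip x y + cnj (ip x y))"
    by (simp add: ip_add ip_add_right ip_cnj[of y x])
  then have "Re (ip (x + y) (x + y)) = Re (ip x x) + Re (ip y y) + 2 * Re (ip x y)"
    by simp
  then show ?thesis
    by (simp add: ip_self)
qed

lemma abs_Re_ip_le: "\<bar>Re (ip x y)\<bar> \<le> norm x * norm y"
proof -
  have "Re (ip x y) \<le> norm x * norm y" for x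
  proof -
    have "(norm (x + y))\<^sup>2 \<le> (norm x + norm y)\<^sup>2"
      by (simp add: norm_triangle_ineq power_mono)
    then show ?thesis
      using norm_add_power2[of x y] by (simp add: power2_sum)
  qed
  from this[of x] this[of "- x"] show ?thesis
    using ip_scaleR[of "-1" x y] by simp
qed

lemma norm_J: "norm (J x) = norm x"
proof -
  have "cnj (ip x x) = ip x x"
    by (simp add: ip_self)
  then have "ip (J x) (J x) = ip x x"
    by (simp add: ip_J ip_cnj[of x "J x"])
  then have "(norm (J x))\<^sup>2 = (norm x)\<^sup>2"
    by (metis ip_self Re_complex_of_real)
  then show ?thesis
    by (simp add: power2_eq_iff_nonneg)
qed

lemma cmod_ip_le: "cmod (ip x y) \<le> 2 * norm x * norm y"
proof -
  have "\<bar>Im (ip x y)\<bar> = \<bar>Re (ip (J x) y)\<bar>"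
    by (simp add: ip_J)
  also have "\<dots> \<le> norm x * norm y"
    using abs_Re_ip_le[of "J x" y] by (simp add: norm_J)
  finally show ?thesis
    using cmod_le[of "ip x y"] abs_Re_ip_le[of x y] by simp
qed

lemma bounded_linear_ip_left: "bounded_linear (\<lambda>x. ip x y)"
proof (rule bounded_linear_intro[of _ "2 * norm y"])
  show "ip (x + x') y = ip x y + ip x' y" for x x'
    by (rule ip_add)
  show "ip (r *\<^sub>R x) y = r *\<^sub>R ip x y" for r x
    by (simp add: ip_scaleR scaleR_conv_of_real)
  show "norm (ip x y) \<le> norm x * (2 * norm y)" for x
    using cmod_ip_le[of x y] by (simp add: algebra_simps)
qed

lemma bounded_clinear_projP: "bounded_clinear_op J (projP J ip z)"
  unfolding bounded_clinear_op_def projP_def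
proof (intro conjI allI)
  show "bounded_linear (\<lambda>x. cscale J (ip x z / ip z z) z)"
    using bounded_linear_compose[OF bounded_linear_cscale_left
        bounded_linear_compose[OF bounded_linear_divide bounded_linear_ip_left]] by simp
  show "cscale J (ip (J x) z / ip z z) z = J (cscale J (ip x z / ip z z) z)" for x
    by (simp add: ip_J J_cscale)
qed


end

lemma is_graph_op_graph: "is_graph (op_graph D A)"
  by (auto simp: is_graph_def op_graph_def)

lemma cl_dom_closed_graph: "closed (op_graph D A) \<Longrightarrow> cl_dom D A = D"
  by (auto simp: cl_dom_def op_graph_def)

lemma cl_op_closed_graph: "closed (op_graph D A) \<Longrightarrow> x \<in> D \<Longrightarrow> cl_op D A x = A x"
  by (auto simp: cl_op_def op_graph_def)

locale projected_generator = complex_hilbert_space J ip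
  for J :: "'a::banach \<Rightarrow> 'a" and ip +
  fixes U :: "real \<Rightarrow> 'a \<Rightarrow> 'a" and z w :: 'a
  assumes U: "sc_group J U" and z: "z \<noteq> 0"
    and adjoint: "\<And>x. x \<in> gen_dom U \<Longrightarrow> ip (gen U x) z = ip x w"
begin

sublocale T: rank_one_perturbation J U "\<lambda>x. ip x w / ip z z" z
  using bounded_linear_compose[OF bounded_linear_divide[of "ip z z"] bounded_linear_ip_left[of w]]
  by (intro rank_one_perturbation.intro complex_structure.intro rank_one_perturbation_axioms.intro
      bounded_linear_J J_J U) (simp_all add: o_def ip_J)

lemma ip_projP: "ip (projP J ip z x) z = ip x z"
  using z by (simp add: projP_def ip_cscale ip_self)

lemma projP_projP: "projP J ip z (projP J ip z x) = projP J ip z x"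
  by (simp add: projP_def[of J ip z "projP J ip z x"] ip_projP) (simp add: projP_def)

lemma ip_projQ: "ip (projQ J ip z x) z = 0"
  by (simp add: projQ_def ip_diff ip_projP)

lemma gen_perturbed_eq_projQ: "x \<in> gen_dom U \<Longrightarrow> gen T.perturbed x = projQ J ip z (gen U x)"
  by (simp add: T.gen_perturbed adjoint projQ_def projP_def)

lemma closed_graph_projQ_gen: "closed (op_graph (gen_dom U) (\<lambda>x. projQ J ip z (gen U x)))"
proof -
  have "op_graph (gen_dom U) (\<lambda>x. projQ J ip z (gen U x)) = op_graph (gen_dom T.perturbed) (gen T.perturbed)"
    by (auto simp: op_graph_def T.gen_dom_perturbed gen_perturbed_eq_projQ)
  then show ?thesis
    using sc_group_closed_graph[OF T.sc_group_perturbed] by simp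
qed

lemma ip_perturbed: "ip (T.perturbed t y) z = ip y z"
  using ip_projQ
  by (intro sc_group_invariant_functional[OF T.sc_group_perturbed] bounded_linear.linear
      bounded_linear_ip_left) (simp add: gen_perturbed_eq_projQ T.gen_dom_perturbed)

lemma projP_perturbed_projQ: "projP J ip z (T.perturbed t (x - projP J ip z x)) = 0"
  using ip_projQ[of x] by (simp add: ip_perturbed projP_def projQ_def)

end

theorem lemma3:
  fixes J :: "'a::banach \<Rightarrow> 'a" and ip :: "'a \<Rightarrow> 'a \<Rightarrow> complex"
    and U :: "real \<Rightarrow> 'a \<Rightarrow> 'a" and z :: 'a
  assumes "complex_hilbert J ip"
    and "sc_group J U"
    and "z \<in> adj_dom ip (gen_dom U) (gen U)"
    and "z \<noteq> 0"
  shows "is_graph (closure (op_graph (gen_dom U) (\<lambda>x. projQ J ip z (gen U x))))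
    \<and> (\<exists>V. sc_group J V
         \<and> gen_dom V = {x. projQ J ip z x \<in> cl_dom (gen_dom U) (\<lambda>x. projQ J ip z (gen U x))}
         \<and> (\<forall>x\<in>gen_dom V. gen V x = cl_op (gen_dom U) (\<lambda>x. projQ J ip z (gen U x)) (projQ J ip z x)))"
proof -
  obtain w where "\<And>x. x \<in> gen_dom U \<Longrightarrow> ip (gen U x) z = ip x w"
    using assms(3) by (auto simp: adj_dom_def)
  with assms interpret projected_generator J ip U z w
    by unfold_locales
  note V = sc_group_compression[OF T.sc_group_perturbed linear_J bounded_clinear_projP
      projP_projP projP_perturbed_projQ]
  show ?thesis
    using closed_graph_projQ_gen V gen_perturbed_eq_projQ
    by (intro conjI exI[of _ "\<lambda>t x. T.perturbed t (x - projP J ip z x) + projP J ip z x"])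
      (auto simp: is_graph_op_graph cl_dom_closed_graph cl_op_closed_graph projQ_def
        T.gen_dom_perturbed)
qed

end
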